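(* Let $1<s<n$, $r=s+n-1$, $d\ge1$ and positive integers $d_1,\dots,d_r\le d$. The type 1 initial system $g_1,\dots,g_r$ defined in the context satisfies condition (H): it defines in $\mathbb{A}^n\times\{\mu_s\ne0\}\subset\mathbb{A}^n\times\mathbb{P}^{s-1}$ a $0$-dimensional variety consisting of exactly $D=\big(\prod_{i=1}^sd_i\big)\big(\sum_{E\subset\{s+1,\dots,r\},\#E=n-s}\prod_{j\in E}d_j\big)$ points $s_1,\dots,s_D$ with $\pi_x(s_i)\ne\pi_x(s_j)$ for $i\ne j$, and the Jacobian determinant of the polynomials obtained from $g_1,\dots,g_r$ by setting $\mu_s=1$ does not vanish at any of these points. The same holds (with $D=\prod_{i=1}^n d_i$ points in $\mathbb{A}^n$ and nonvanishing Jacobian) for $s=1$ and $s=n$.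
   Context: Type 1 initial system for $1<s<n$: $g_i(x)=\prod_{j=1}^{d_i}(x_i-j)$ for $1\le i\le s$, and $g_i(x,\mu)=\big(\prod_{j=1}^{d_i}\phi_{ij}(x)\big)\psi_i(\mu)$ for $s+1\le i\le r$, where $\phi_{ij}(x)=\sum_{k=s+1}^n\frac{x_k}{(i-s-1)d+j-1+k-s}+\frac1{(i-s-1)d+j-1+n+1-s}$ and $\psi_i(\mu)=\sum_{k=1}^s\frac{\mu_k}{i-s-1+k}$, with variables $x=(x_1,\dots,x_n)$, $\mu=(\mu_1,\dots,\mu_s)$. For $s=1$ and $s=n$ the type 1 initial system is $g_i(x)=\prod_{j=1}^{d_i}(x_i-j)$, $1\le i\le n$. $\pi_x$ is the projection to $\mathbb{A}^n$. *)

theory Defs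
  imports "HOL-Analysis.Analysis"
begin

text \<open>Points of affine space are encoded as functions nat => complex; coordinate k lives
at index k (1-based) and all coordinates outside the relevant index range are 0.\<close>

text \<open>phi_{ij}(x) of the type 1 initial system (i >= s+1, j >= 1, so all denominators positive).\<close>
definition phi1 :: "nat \<Rightarrow> nat \<Rightarrow> nat \<Rightarrow> nat \<Rightarrow> nat \<Rightarrow> (nat \<Rightarrow> complex) \<Rightarrow> complex" where
  "phi1 n s d i j x =
     (\<Sum>k=s+1..n. x k / of_nat ((i-s-1)*d + (j-1) + (k-s)))
     + 1 / of_nat ((i-s-1)*d + (j-1) + (n+1-s))"

definition psi1 :: "nat \<Rightarrow> nat \<Rightarrow> (nat \<Rightarrow> complex) \<Rightarrow> complex" where
  "psi1 s i mu = (\<Sum>k=1..s. mu k / of_nat ((i-s-1) + k))"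

definition type1_g :: "nat \<Rightarrow> nat \<Rightarrow> nat \<Rightarrow> (nat \<Rightarrow> nat) \<Rightarrow> nat
    \<Rightarrow> (nat \<Rightarrow> complex) \<Rightarrow> (nat \<Rightarrow> complex) \<Rightarrow> complex" where
  "type1_g n s d dd i x mu =
     (if i \<le> s then (\<Prod>j=1..dd i. x i - of_nat j)
      else (\<Prod>j=1..dd i. phi1 n s d i j x) * psi1 s i mu)"

text \<open>Dehomogenisation mu_s = 1: affine variables z_1..z_n are x_1..x_n and
 z_{n+1}..z_{n+s-1} are mu_1..mu_{s-1}.\<close>
definition type1_chart :: "nat \<Rightarrow> nat \<Rightarrow> nat \<Rightarrow> (nat \<Rightarrow> nat) \<Rightarrow> nat
    \<Rightarrow> (nat \<Rightarrow> complex) \<Rightarrow> complex" where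
  "type1_chart n s d dd i z =
     type1_g n s d dd i z (\<lambda>k. if k = s then 1 else z (n + k))"

definition type1_simple :: "(nat \<Rightarrow> nat) \<Rightarrow> nat \<Rightarrow> (nat \<Rightarrow> complex) \<Rightarrow> complex" where
  "type1_simple dd i x = (\<Prod>j=1..dd i. x i - of_nat j)"

definition zero_set :: "nat \<Rightarrow> (nat \<Rightarrow> (nat \<Rightarrow> complex) \<Rightarrow> complex) \<Rightarrow> (nat \<Rightarrow> complex) set" where
  "zero_set m F = {z. (\<forall>k. k \<notin> {1..m} \<longrightarrow> z k = 0) \<and> (\<forall>i\<in>{1..m}. F i z = 0)}"

definition partial :: "((nat \<Rightarrow> complex) \<Rightarrow> complex) \<Rightarrow> nat \<Rightarrow> (nat \<Rightarrow> complex) \<Rightarrow> complex" where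
  "partial f k z = deriv (\<lambda>t. f (z(k := t))) (z k)"

definition jacobian_det :: "nat \<Rightarrow> (nat \<Rightarrow> (nat \<Rightarrow> complex) \<Rightarrow> complex) \<Rightarrow> (nat \<Rightarrow> complex) \<Rightarrow> complex" where
  "jacobian_det m F z =
     (\<Sum>\<sigma> | \<sigma> permutes {1..m}. of_int (sign \<sigma>) * (\<Prod>i=1..m. partial (F i) (\<sigma> i) z))"

definition proj_x :: "nat \<Rightarrow> (nat \<Rightarrow> complex) \<Rightarrow> (nat \<Rightarrow> complex)" where
  "proj_x n z = (\<lambda>k. if k \<in> {1..n} then z k else 0)"

end

theory Submission
  imports Defs "Jordan_Normal_Form.Determinant"
begin

text \<open>Apart from the grid factors \<open>x\<^sub>i - j\<close> of the first \<open>s\<close> equations, every factor of the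
  system is, after an index shift, a Cauchy form \<open>\<Sum>k=1..N. c\<^sub>k / (a + k) + 1 / (a + N + 1)\<close>:
  in the unknowns \<open>x\<^sub>s\<^sub>+\<^sub>1, \<dots>, x\<^sub>n\<close> for the \<open>\<phi>\<^sub>i\<^sub>j\<close>, in \<open>\<mu>\<^sub>1, \<dots>, \<mu>\<^sub>s\<^sub>-\<^sub>1\<close> for the \<open>\<psi>\<^sub>i\<close>,
  and with pairwise distinct natural shifts \<open>a\<close>. Since Cauchy matrices are nonsingular, at most
  \<open>N\<close> such forms have a common zero and any \<open>N\<close> of them have exactly one. A zero in the chart
  \<open>\<mu>\<^sub>s = 1\<close> therefore consists of a grid point for \<open>x\<^sub>1, \<dots>, x\<^sub>s\<close>, a set \<open>E\<close> of \<open>n - s\<close> rows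
  \<open>i > s\<close> with one vanishing \<open>\<phi>\<^sub>i\<^sub>j\<close> each (which fixes the remaining \<open>x\<close>), and vanishing \<open>\<psi>\<^sub>i\<close>
  in the other \<open>s - 1\<close> rows (which fixes \<open>\<mu>\<close>). Every such choice occurs exactly once, and the
  \<open>x\<close>-part of the zero already determines it. At such a zero every row of the Jacobian matrix
  is a nonzero multiple of a unit vector or of a row of one of the two Cauchy matrices, so the
  Jacobian matrix has trivial kernel.\<close>

section \<open>Linear algebra for systems indexed by \<open>1..m\<close>\<close>

text \<open>Index \<open>0\<close> carries a unit, so that the 0-based matrices of the library can represent
  a linear system with rows and columns indexed by \<open>1..m\<close>.\<close>

definition border_mat :: "nat \<Rightarrow> (nat \<Rightarrow> nat \<Rightarrow> complex) \<Rightarrow> complex mat" where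
  "border_mat m F = mat (Suc m) (Suc m) (\<lambda>(i, j). if i = 0 \<or> j = 0 then of_bool (i = j) else F i j)"

lemma border_mat_carrier: "border_mat m F \<in> carrier_mat (Suc m) (Suc m)"
  unfolding border_mat_def by simp

lemma border_mat_mult_vec:
  assumes "i \<in> {1..m}" and "dim_vec v = Suc m"
  shows "(border_mat m F *\<^sub>v v) $ i = (\<Sum>j=1..m. F i j * v $ j)"
proof -
  have "(border_mat m F *\<^sub>v v) $ i = (\<Sum>j=0..<Suc m. (if j = 0 then 0 else F i j) * v $ j)"
    using assms unfolding border_mat_def by (auto simp: scalar_prod_def intro!: sum.cong)
  also have "\<dots> = (\<Sum>j=1..m. F i j * v $ j)"
    by (subst sum.atLeast_Suc_lessThan)
      (auto simp: atLeastLessThanSuc_atLeastAtMost intro!: sum.cong)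
  finally show ?thesis .
qed

lemma border_mat_mult_vec_0:
  assumes "dim_vec v = Suc m"
  shows "(border_mat m F *\<^sub>v v) $ 0 = v $ 0"
proof -
  have "(border_mat m F *\<^sub>v v) $ 0 = (\<Sum>j=0..<Suc m. of_bool (j = 0) * v $ j)"
    using assms unfolding border_mat_def by (auto simp: scalar_prod_def intro!: sum.cong)
  then show ?thesis by (simp add: sum.atLeast_Suc_lessThan)
qed

lemma permutes_fixing_0:
  assumes "p permutes {0..<Suc m}" and "p 0 = 0"
  shows "p permutes {1..m}"
  unfolding permutes_def
proof (intro conjI allI impI)
  fix x assume "x \<notin> {1..m}"
  then have "x = 0 \<or> x \<notin> {0..<Suc m}" by auto
  then show "p x = x" using assms by (auto simp: permutes_def)
next
  fix y show "\<exists>!x. p x = y" using assms(1) by (simp add: permutes_def)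
qed

lemma det_border_mat:
  "Determinant.det (border_mat m F) =
     (\<Sum>\<sigma> | \<sigma> permutes {1..m}. of_int (sign \<sigma>) * (\<Prod>i=1..m. F i (\<sigma> i)))"
proof -
  let ?G = "border_mat m F"
  let ?P = "{p. p permutes {0..<Suc m}}"
  let ?Q = "{p. p permutes {1..m}}"
  have "?Q \<subseteq> ?P" by (auto intro: permutes_subset)
  moreover have "signof p * (\<Prod>i=0..<Suc m. ?G $$ (i, p i)) = 0" if "p \<in> ?P - ?Q" for p
  proof -
    have "p 0 \<noteq> 0" using that permutes_fixing_0 by blast
    moreover have "p 0 < Suc m" using that permutes_in_image[of p "{0..<Suc m}" 0] by auto
    ultimately have "?G $$ (0, p 0) = 0" unfolding border_mat_def by simp
    then show ?thesis by (subst prod.atLeast_Suc_lessThan) auto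
  qed
  ultimately have "Determinant.det ?G = (\<Sum>p\<in>?Q. signof p * (\<Prod>i=0..<Suc m. ?G $$ (i, p i)))"
    unfolding det_def'[OF border_mat_carrier]
    by (intro sum.mono_neutral_right) (auto simp: finite_permutations)
  also have "\<dots> = (\<Sum>\<sigma>\<in>?Q. of_int (sign \<sigma>) * (\<Prod>i=1..m. F i (\<sigma> i)))"
  proof (rule sum.cong[OF refl])
    fix p assume "p \<in> ?Q"
    then have p: "p permutes {1..m}" by simp
    have entry: "?G $$ (i, p i) = F i (p i)" if "i \<in> {1..m}" for i
    proof -
      have "p i \<in> {1..m}" using that permutes_in_image[OF p] by simp
      then show ?thesis using that by (simp add: border_mat_def less_Suc_eq_le)
    qed
    have "p 0 = 0" using p by (simp add: permutes_def)
    then have "(\<Prod>i=0..<Suc m. ?G $$ (i, p i)) = ?G $$ (0, 0) * (\<Prod>i=1..m. ?G $$ (i, p i))"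
      by (simp add: atLeastLessThanSuc_atLeastAtMost prod.atLeast_Suc_atMost)
    also have "\<dots> = (\<Prod>i=1..m. F i (p i))"
      using entry by (simp add: border_mat_def)
    finally have "(\<Prod>i=0..<Suc m. ?G $$ (i, p i)) = (\<Prod>i=1..m. F i (p i))" .
    then show "signof p * (\<Prod>i=0..<Suc m. ?G $$ (i, p i)) = of_int (sign p) * (\<Prod>i=1..m. F i (p i))"
      by simp
  qed
  finally show ?thesis by simp
qed

lemma det_border_mat_nonzero:
  assumes ker: "\<And>v. \<forall>i\<in>{1..m}. (\<Sum>j=1..m. F i j * v j) = 0 \<Longrightarrow> \<forall>j\<in>{1..m}. v j = 0"
  shows "Determinant.det (border_mat m F) \<noteq> 0"
proof
  assume "Determinant.det (border_mat m F) = 0"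
  then obtain v where v: "v \<in> carrier_vec (Suc m)" "v \<noteq> 0\<^sub>v (Suc m)"
      "border_mat m F *\<^sub>v v = 0\<^sub>v (Suc m)"
    using det_0_iff_vec_prod_zero_field[OF border_mat_carrier] by blast
  have dim: "dim_vec v = Suc m" using v(1) by simp
  have rows: "(border_mat m F *\<^sub>v v) $ i = 0" if "i \<le> m" for i
    using v(3) that by simp
  have "v $ 0 = 0" using rows[of 0] border_mat_mult_vec_0[OF dim] by simp
  moreover have "\<forall>i\<in>{1..m}. (\<Sum>j=1..m. F i j * v $ j) = 0"
    using rows border_mat_mult_vec[OF _ dim, of _ F] by auto
  then have "\<forall>j\<in>{1..m}. v $ j = 0" by (rule ker)
  ultimately have "v $ i = 0" if "i \<le> m" for i using that by (cases "i = 0") auto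
  then have "v = 0\<^sub>v (Suc m)" using dim by (intro eq_vecI) auto
  with v(2) show False ..
qed

lemma jacobian_det_nonzero:
  assumes "\<And>v. \<forall>i\<in>{1..m}. (\<Sum>q=1..m. partial (F i) q z * v q) = 0 \<Longrightarrow> \<forall>q\<in>{1..m}. v q = 0"
  shows "jacobian_det m F z \<noteq> 0"
  using det_border_mat_nonzero[of m "\<lambda>i q. partial (F i) q z"] assms
  unfolding jacobian_det_def det_border_mat by simp

lemma linear_system_solvable:
  fixes F :: "nat \<Rightarrow> nat \<Rightarrow> complex"
  assumes ker: "\<And>v. \<forall>i\<in>{1..m}. (\<Sum>j=1..m. F i j * v j) = 0 \<Longrightarrow> \<forall>j\<in>{1..m}. v j = 0"
  shows "\<exists>v. \<forall>i\<in>{1..m}. (\<Sum>j=1..m. F i j * v j) = b i"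
proof -
  have "border_mat m F \<in> Units (ring_mat TYPE(complex) (Suc m) ())"
    by (rule det_non_zero_imp_unit[OF border_mat_carrier det_border_mat_nonzero[OF ker]])
  then obtain H where H: "H \<in> carrier_mat (Suc m) (Suc m)" "border_mat m F * H = 1\<^sub>m (Suc m)"
    unfolding Units_def ring_mat_def by auto
  define w where "w = H *\<^sub>v vec (Suc m) b"
  have dim: "dim_vec w = Suc m" using H(1) unfolding w_def by simp
  have "border_mat m F *\<^sub>v w = vec (Suc m) b"
    unfolding w_def using H
    by (subst assoc_mult_mat_vec[symmetric, OF border_mat_carrier H(1)]) auto
  then have "(border_mat m F *\<^sub>v w) $ i = b i" if "i \<le> m" for i
    using that by simp
  then have "\<forall>i\<in>{1..m}. (\<Sum>j=1..m. F i j * w $ j) = b i"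
    using border_mat_mult_vec[OF _ dim, of _ F] by auto
  then show ?thesis by blast
qed

lemma zero_if_diagonal_row:
  fixes D :: complex and v :: "nat \<Rightarrow> complex"
  assumes "i \<in> {1..m}" and "D \<noteq> 0" and "(\<Sum>q=1..m. (if q = i then D else 0) * v q) = 0"
  shows "v i = 0"
proof -
  have "(\<Sum>q=1..m. (if q = i then D else 0) * v q) = (\<Sum>q=1..m. if q = i then D * v i else 0)"
    by (intro sum.cong) auto
  also have "\<dots> = D * v i" using assms(1) by simp
  finally show ?thesis using assms(2,3) by simp
qed

lemma sum_scaled_row_zero:
  fixes c :: complex
  assumes "\<And>q. P q = c * a q" and "c \<noteq> 0" and "(\<Sum>q\<in>Q. P q * v q) = 0"
  shows "(\<Sum>q\<in>Q. a q * v q) = 0"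
proof -
  have "(\<Sum>q\<in>Q. P q * v q) = c * (\<Sum>q\<in>Q. a q * v q)"
    by (simp add: assms(1) sum_distrib_left ac_simps)
  then show ?thesis using assms(2,3) by simp
qed

section \<open>Cauchy forms\<close>

lemma sum_prod_Diff_at_zero:
  fixes c :: "'a \<Rightarrow> 'b::comm_ring_1"
  assumes "finite S" and "j0 \<in> S" and "c j0 = 0"
  shows "(\<Sum>j\<in>S. b j * (\<Prod>l\<in>S-{j}. c l)) = b j0 * (\<Prod>l\<in>S-{j0}. c l)"
proof -
  have "(\<Prod>l\<in>S-{j}. c l) = 0" if "j \<in> S" "j \<noteq> j0" for j
    using assms that by (intro prod_zero) auto
  then have "(\<Sum>j\<in>S. b j * (\<Prod>l\<in>S-{j}. c l)) =
      (\<Sum>j\<in>S. if j = j0 then b j0 * (\<Prod>l\<in>S-{j0}. c l) else 0)"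
    by (intro sum.cong) auto
  also have "\<dots> = b j0 * (\<Prod>l\<in>S-{j0}. c l)" using assms by simp
  finally show ?thesis .
qed

definition cauchy_numerator :: "nat \<Rightarrow> (nat \<Rightarrow> complex) \<Rightarrow> complex poly" where
  "cauchy_numerator N c = (\<Sum>k=1..N. Polynomial.smult (c k) (\<Prod>l\<in>{1..N}-{k}. [:of_nat l, 1:]))"

lemma poly_cauchy_numerator:
  "poly (cauchy_numerator N c) x = (\<Sum>k=1..N. c k * (\<Prod>l\<in>{1..N}-{k}. x + of_nat l))"
  by (simp add: cauchy_numerator_def poly_sum poly_prod add.commute)

lemma degree_cauchy_numerator: "degree (cauchy_numerator N c) \<le> N - 1"
  unfolding cauchy_numerator_def
proof (rule degree_sum_le)
  fix k assume k: "k \<in> {1..N}"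
  have "degree (\<Prod>l\<in>{1..N}-{k}. [:of_nat l, 1::complex:]) \<le> (\<Sum>l\<in>{1..N}-{k}. 1)"
    using degree_prod_sum_le[of "{1..N}-{k}" "\<lambda>l. [:of_nat l, 1::complex:]"] by (simp add: o_def)
  also have "\<dots> = N - 1" using k by simp
  finally show "degree (Polynomial.smult (c k) (\<Prod>l\<in>{1..N}-{k}. [:of_nat l, 1:])) \<le> N - 1"
    using degree_smult_le order_trans by blast
qed simp

lemma poly_cauchy_numerator_of_nat:
  "poly (cauchy_numerator N c) (of_nat a) =
     (\<Prod>l=1..N. of_nat a + of_nat l) * (\<Sum>k=1..N. c k / of_nat (a + k))"
  unfolding poly_cauchy_numerator sum_distrib_left
proof (rule sum.cong[OF refl])
  fix k assume k: "k \<in> {1..N}"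
  then have "(\<Prod>l=1..N. of_nat a + of_nat l :: complex) =
      of_nat (a + k) * (\<Prod>l\<in>{1..N}-{k}. of_nat a + of_nat l)"
    by (subst prod.remove[of _ k]) auto
  moreover have "(of_nat (a + k) :: complex) \<noteq> 0" using k by (simp only: of_nat_eq_0_iff) simp
  ultimately show "c k * (\<Prod>l\<in>{1..N}-{k}. of_nat a + of_nat l) =
      (\<Prod>l=1..N. of_nat a + of_nat l) * (c k / of_nat (a + k))"
    by (simp add: field_simps)
qed

lemma poly_cauchy_numerator_at_pole:
  "k \<in> {1..N} \<Longrightarrow>
     poly (cauchy_numerator N c) (- of_nat k) = c k * (\<Prod>l\<in>{1..N}-{k}. - of_nat k + of_nat l)"
  unfolding poly_cauchy_numerator by (intro sum_prod_Diff_at_zero) auto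

text \<open>Nonsingularity of the Cauchy matrix \<open>(1 / (a + k))\<close>, \<open>a \<in> A\<close>, \<open>1 \<le> k \<le> N\<close>: clearing
  denominators turns a kernel vector \<open>c\<close> into a polynomial of degree \<open>< N\<close> with the \<open>N\<close> roots
  \<open>A\<close>, whose value at \<open>-k\<close> is a nonzero multiple of \<open>c\<^sub>k\<close>.\<close>

lemma cauchy_kernel_trivial:
  fixes c :: "nat \<Rightarrow> complex"
  assumes "finite A" and "card A = N"
    and zero: "\<forall>a\<in>A. (\<Sum>k=1..N. c k / of_nat (a + k)) = 0"
  shows "\<forall>k\<in>{1..N}. c k = 0"
proof -
  have "cauchy_numerator N c = 0"
  proof (cases "N = 0")
    case False
    have "card (of_nat ` A :: complex set) = N"
      using assms by (simp add: card_image inj_on_def)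
    then show ?thesis
      using False zero degree_cauchy_numerator[of N c]
      by (intro poly_eqI_degree[of "of_nat ` A"]) (auto simp: poly_cauchy_numerator_of_nat)
  qed (simp add: cauchy_numerator_def)
  moreover have "(\<Prod>l\<in>{1..N}-{k}. - of_nat k + of_nat l :: complex) \<noteq> 0" for k
    by (simp add: prod_zero_iff)
  ultimately show ?thesis using poly_cauchy_numerator_at_pole[of _ N c] by fastforce
qed

text \<open>The constant term is the coefficient of an \<open>(N+1)\<close>-st unknown that is fixed to \<open>1\<close>.\<close>

definition cauchy_form :: "nat \<Rightarrow> nat \<Rightarrow> (nat \<Rightarrow> complex) \<Rightarrow> complex" where
  "cauchy_form N a c = (\<Sum>k=1..N. c k / of_nat (a + k)) + 1 / of_nat (a + N + 1)"

lemma cauchy_form_cong: "(\<And>k. k \<in> {1..N} \<Longrightarrow> c k = c' k) \<Longrightarrow> cauchy_form N a c = cauchy_form N a c'"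
  unfolding cauchy_form_def by (auto intro!: sum.cong)

lemma card_common_zeros_cauchy_form_le:
  assumes "finite A" and "\<forall>a\<in>A. cauchy_form N a c = 0"
  shows "card A \<le> N"
proof (rule ccontr)
  assume "\<not> card A \<le> N"
  then obtain B where B: "B \<subseteq> A" "card B = Suc N" "finite B"
    by (metis obtain_subset_with_card_n not_less_eq_eq)
  define c' where "c' = c(Suc N := 1)"
  have "cauchy_form N a c = (\<Sum>k=1..Suc N. c' k / of_nat (a + k))" for a
    unfolding cauchy_form_def c'_def by (auto simp: add_ac intro!: sum.cong)
  then have "\<forall>a\<in>B. (\<Sum>k=1..Suc N. c' k / of_nat (a + k)) = 0" using assms B by auto
  from cauchy_kernel_trivial[OF B(3,2) this] have "c' (Suc N) = 0" by simp
  then show False by (simp add: c'_def)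
qed

lemma common_zero_cauchy_form_unique:
  assumes "finite A" and "card A = N"
    and "\<forall>a\<in>A. cauchy_form N a c = 0" and "\<forall>a\<in>A. cauchy_form N a c' = 0"
  shows "\<forall>k\<in>{1..N}. c k = c' k"
proof -
  have "(\<Sum>k=1..N. (c k - c' k) / of_nat (a + k)) = cauchy_form N a c - cauchy_form N a c'" for a
    by (simp add: cauchy_form_def diff_divide_distrib sum_subtractf)
  then have "\<forall>a\<in>A. (\<Sum>k=1..N. (c k - c' k) / of_nat (a + k)) = 0" using assms(3,4) by simp
  from cauchy_kernel_trivial[OF assms(1,2) this] show ?thesis by simp
qed

lemma common_zero_cauchy_form_exists:
  assumes "finite A" and "card A = N"
  shows "\<exists>c. \<forall>a\<in>A. cauchy_form N a c = 0"
proof -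
  obtain f where f: "bij_betw f {1..N} A"
    using ex_bij_betw_nat_finite_1[OF assms(1)] assms(2) by auto
  then have A: "A = f ` {1..N}" by (simp add: bij_betw_def)
  have "\<forall>j\<in>{1..N}. v j = 0" if "\<forall>i\<in>{1..N}. (\<Sum>j=1..N. 1 / of_nat (f i + j) * v j) = 0"
    for v :: "nat \<Rightarrow> complex"
    using cauchy_kernel_trivial[OF assms, of v] that unfolding A by auto
  then obtain v :: "nat \<Rightarrow> complex"
    where "\<forall>i\<in>{1..N}. (\<Sum>j=1..N. 1 / of_nat (f i + j) * v j) = - 1 / of_nat (f i + N + 1)"
    using linear_system_solvable[of N "\<lambda>i j. 1 / of_nat (f i + j)" "\<lambda>i. - 1 / of_nat (f i + N + 1)"]
    by blast
  then have "\<forall>a\<in>A. cauchy_form N a v = 0" unfolding A by (auto simp: cauchy_form_def)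
  then show ?thesis by blast
qed

text \<open>Coefficient of the variable \<open>z q\<close> in the Cauchy form evaluated at \<open>c k = z (off + k)\<close>.\<close>

definition cauchy_coeff :: "nat \<Rightarrow> nat \<Rightarrow> nat \<Rightarrow> nat \<Rightarrow> complex" where
  "cauchy_coeff N a off q = (if q \<in> {off+1..off+N} then 1 / of_nat (a + (q - off)) else 0)"

lemma cauchy_form_upd:
  "cauchy_form N a (\<lambda>k. (z(q := t)) (off + k)) =
     cauchy_form N a (\<lambda>k. z (off + k)) + cauchy_coeff N a off q * (t - z q)"
proof (cases "q \<in> {off+1..off+N}")
  case False
  then show ?thesis by (auto simp: cauchy_coeff_def intro!: cauchy_form_cong)
next
  case True
  define k0 where "k0 = q - off"
  have k0: "k0 \<in> {1..N}" "q = off + k0" using True by (auto simp: k0_def)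
  have "(\<Sum>k=1..N. (z(q := t)) (off + k) / of_nat (a + k)) =
      (\<Sum>k=1..N. z (off + k) / of_nat (a + k) + (if k = k0 then (t - z q) / of_nat (a + k0) else 0))"
    using k0 by (intro sum.cong) (auto simp: diff_divide_distrib)
  then show ?thesis using k0 by (simp add: cauchy_form_def cauchy_coeff_def sum.distrib)
qed

lemma sum_cauchy_coeff:
  assumes "off + N \<le> M"
  shows "(\<Sum>q=1..M. cauchy_coeff N a off q * v q) = (\<Sum>k=1..N. v (off + k) / of_nat (a + k))"
proof -
  have "(\<Sum>q=1..M. cauchy_coeff N a off q * v q) =
      (\<Sum>q=1..M. if q \<in> {off+1..off+N} then v q / of_nat (a + (q - off)) else 0)"
    by (intro sum.cong) (auto simp: cauchy_coeff_def)
  also have "\<dots> = (\<Sum>q\<in>{off+1..off+N}. v q / of_nat (a + (q - off)))"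
    using assms by (intro sum.mono_neutral_cong_right) auto
  also have "\<dots> = (\<Sum>k=1..N. v (off + k) / of_nat (a + k))"
    using sum.shift_bounds_cl_nat_ivl[of "\<lambda>q. v q / of_nat (a + (q - off))" 1 off N]
    by (simp add: add_ac)
  finally show ?thesis .
qed

section \<open>Partial derivatives of products of affine functions\<close>

lemma partial_eqI:
  assumes "\<And>t. f (z(q := t)) = h t" and "(h has_field_derivative D) (at (z q))"
  shows "partial f q z = D"
  using DERIV_imp_deriv[OF assms(2)] assms(1) unfolding partial_def by presburger

lemma has_field_derivative_prod_affine:
  fixes c b :: "nat \<Rightarrow> complex"
  shows "((\<lambda>t. \<Prod>j\<in>S. c j + b j * (t - t0)) has_field_derivative
          (\<Sum>j\<in>S. b j * (\<Prod>l\<in>S-{j}. c l))) (at t0)"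
proof -
  have "((\<lambda>t. \<Prod>j\<in>S. c j + b j * (t - t0)) has_field_derivative
          (\<Sum>j\<in>S. b j * (\<Prod>l\<in>S-{j}. c l + b l * (t0 - t0)))) (at t0)"
    by (rule has_field_derivative_prod) (auto intro!: derivative_eq_intros)
  then show ?thesis by simp
qed

lemma has_field_derivative_prod_affine_mult_affine:
  fixes c b :: "nat \<Rightarrow> complex"
  shows "((\<lambda>t. (\<Prod>j\<in>S. c j + b j * (t - t0)) * (C + B * (t - t0))) has_field_derivative
          (\<Sum>j\<in>S. b j * (\<Prod>l\<in>S-{j}. c l)) * C + (\<Prod>j\<in>S. c j) * B) (at t0)"
proof -
  have "((\<lambda>t. C + B * (t - t0)) has_field_derivative B) (at t0)"
    by (auto intro!: derivative_eq_intros)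
  from DERIV_mult[OF has_field_derivative_prod_affine this] show ?thesis
    by (rule DERIV_cong) (simp add: algebra_simps)
qed

definition grid_deriv :: "nat \<Rightarrow> complex \<Rightarrow> complex" where
  "grid_deriv K x = (\<Sum>j=1..K. \<Prod>l\<in>{1..K}-{j}. x - of_nat l)"

lemma partial_grid_factor:
  assumes "\<And>w. f w = (\<Prod>j=1..K. w i - of_nat j)"
  shows "partial f q z = (if q = i then grid_deriv K (z i) else 0)"
proof -
  have "partial f q z = (\<Sum>j=1..K. of_bool (q = i) * (\<Prod>l\<in>{1..K}-{j}. z i - of_nat l))"
  proof (rule partial_eqI)
    fix t
    show "f (z(q := t)) = (\<Prod>j=1..K. (z i - of_nat j) + of_bool (q = i) * (t - z q))"
      unfolding assms by (rule prod.cong) auto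
  qed (rule has_field_derivative_prod_affine)
  then show ?thesis by (simp add: grid_deriv_def)
qed

lemma grid_deriv_nonzero:
  assumes "g \<in> {1..K}"
  shows "grid_deriv K (of_nat g) \<noteq> 0"
proof -
  have "grid_deriv K (of_nat g) = 1 * (\<Prod>l\<in>{1..K}-{g}. of_nat g - of_nat l)"
    unfolding grid_deriv_def using assms
      sum_prod_Diff_at_zero[of "{1..K}" g "\<lambda>l. of_nat g - of_nat l :: complex" "\<lambda>_. 1"]
    by simp
  then show ?thesis by (simp add: prod_zero_iff)
qed

section \<open>The case \<open>s = 1\<close> or \<open>s = n\<close>: a grid\<close>

definition grid_point :: "nat \<Rightarrow> (nat \<Rightarrow> nat) \<Rightarrow> nat \<Rightarrow> complex" where
  "grid_point n g k = (if k \<in> {1..n} then of_nat (g k) else 0)"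

lemma grid_choice:
  assumes "\<forall>i\<in>I. \<exists>j\<in>{1..dd i}. z i = of_nat j"
  obtains g where "g \<in> PiE I (\<lambda>i. {1..dd i})" and "\<forall>i\<in>I. z i = of_nat (g i)"
proof -
  obtain g where "\<forall>i\<in>I. g i \<in> {1..dd i} \<and> z i = of_nat (g i)" using assms by metis
  then show ?thesis by (intro that[of "restrict g I"]) auto
qed

lemma zero_set_type1_simple:
  "zero_set n (type1_simple dd) = grid_point n ` PiE {1..n} (\<lambda>i. {1..dd i})"
proof (intro equalityI subsetI)
  fix z assume "z \<in> zero_set n (type1_simple dd)"
  then have outside: "\<forall>k. k \<notin> {1..n} \<longrightarrow> z k = 0"
    and grid: "\<forall>i\<in>{1..n}. \<exists>j\<in>{1..dd i}. z i = of_nat j"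
    unfolding zero_set_def type1_simple_def by auto
  obtain g where g: "g \<in> PiE {1..n} (\<lambda>i. {1..dd i})" "\<forall>i\<in>{1..n}. z i = of_nat (g i)"
    using grid by (rule grid_choice)
  have "z = grid_point n g" using g(2) outside by (auto simp: grid_point_def)
  with g(1) show "z \<in> grid_point n ` PiE {1..n} (\<lambda>i. {1..dd i})" by blast
qed (auto simp: zero_set_def type1_simple_def grid_point_def)

lemma inj_on_grid_point: "inj_on (grid_point n) (PiE {1..n} B)"
proof (rule inj_onI, rule PiE_ext)
  fix g g' k assume "grid_point n g = grid_point n g'" and "k \<in> {1..n}"
  then show "g k = g' k" by (metis grid_point_def of_nat_eq_iff)
qed

lemma jacobian_det_type1_simple_nonzero:
  assumes "z \<in> zero_set n (type1_simple dd)"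
  shows "jacobian_det n (type1_simple dd) z \<noteq> 0"
proof (rule jacobian_det_nonzero)
  obtain g where g: "g \<in> PiE {1..n} (\<lambda>i. {1..dd i})" "z = grid_point n g"
    using assms zero_set_type1_simple by blast
  fix v assume ker: "\<forall>i\<in>{1..n}. (\<Sum>q=1..n. partial (type1_simple dd i) q z * v q) = 0"
  show "\<forall>i\<in>{1..n}. v i = 0"
  proof
    fix i assume i: "i \<in> {1..n}"
    have "partial (type1_simple dd i) q z = (if q = i then grid_deriv (dd i) (z i) else 0)" for q
      by (rule partial_grid_factor) (simp add: type1_simple_def)
    moreover have "grid_deriv (dd i) (z i) \<noteq> 0"
      using grid_deriv_nonzero[OF PiE_mem[OF g(1) i]] g(2) i by (simp add: grid_point_def)
    moreover have "(\<Sum>q=1..n. partial (type1_simple dd i) q z * v q) = 0" using ker i by blast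
    ultimately show "v i = 0" using i by (intro zero_if_diagonal_row) auto
  qed
qed

section \<open>The case \<open>1 < s < n\<close>\<close>

locale type1_system =
  fixes n s d :: nat and dd :: "nat \<Rightarrow> nat"
  assumes s_gt_1: "1 < s" and s_lt_n: "s < n" and d_pos: "1 \<le> d"
    and degrees: "\<forall>i\<in>{1..s+n-1}. 1 \<le> dd i \<and> dd i \<le> d"
begin

text \<open>In the chart the coordinates \<open>1..s\<close> are grid coordinates, the \<open>m\<close> coordinates
  \<open>s+1..n\<close> enter the factors \<open>\<phi>\<^sub>i\<^sub>j\<close> and the \<open>p\<close> coordinates \<open>n+1..r\<close> are \<open>\<mu>\<^sub>1, \<dots>, \<mu>\<^sub>p\<close>.\<close>

definition "r = s + n - 1"
definition "m = n - s"
definition "p = s - 1"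

lemma card_rows: "card {s+1..r} = m + p"
  using s_gt_1 s_lt_n by (simp add: m_def p_def r_def)

lemma degree_bounds: "i \<in> {1..r} \<Longrightarrow> 1 \<le> dd i \<and> dd i \<le> d"
  using degrees by (simp add: r_def)

definition "phi_offset i j = (i - s - 1) * d + (j - 1)"
definition "psi_offset i = i - s - 1"

definition "phi i j z = cauchy_form m (phi_offset i j) (\<lambda>k. z (s + k))"
definition "psi i z = cauchy_form p (psi_offset i) (\<lambda>k. z (n + k))"

lemma phi1_eq_phi: "phi1 n s d i j z = phi i j z"
proof -
  have "(\<Sum>k=s+1..n. z k / of_nat ((i-s-1)*d + (j-1) + (k-s))) =
      (\<Sum>k=1..m. z (s + k) / of_nat (phi_offset i j + k))"
    using sum.shift_bounds_cl_nat_ivl[of "\<lambda>k. z k / of_nat ((i-s-1)*d + (j-1) + (k-s))" 1 s m] s_lt_n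
    by (simp add: phi_offset_def m_def add_ac)
  then show ?thesis
    unfolding phi1_def phi_def cauchy_form_def using s_lt_n by (simp add: phi_offset_def m_def add_ac)
qed

text \<open>Setting \<open>\<mu>\<^sub>s = 1\<close> produces the constant term of the Cauchy form.\<close>

lemma psi1_chart_eq_psi: "psi1 s i (\<lambda>k. if k = s then 1 else z (n + k)) = psi i z"
proof -
  have s: "{1..s} = insert s {1..p}" "s \<notin> {1..p}" using s_gt_1 by (auto simp: p_def)
  have offset: "i - s - 1 + s = psi_offset i + p + 1" using s_gt_1 by (simp add: psi_offset_def p_def)
  have "psi1 s i (\<lambda>k. if k = s then 1 else z (n + k)) =
      1 / of_nat (i - s - 1 + s) + (\<Sum>k=1..p. (if k = s then 1 else z (n + k)) / of_nat (i - s - 1 + k))"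
    unfolding psi1_def s(1) by (subst sum.insert[OF _ s(2)]) simp_all
  also have "(\<Sum>k=1..p. (if k = s then 1 else z (n + k)) / of_nat (i - s - 1 + k)) =
      (\<Sum>k=1..p. z (n + k) / of_nat (psi_offset i + k))"
    using s(2) by (intro sum.cong) (auto simp: psi_offset_def)
  finally show ?thesis unfolding psi_def cauchy_form_def offset by simp
qed

lemma chart_low: "i \<in> {1..s} \<Longrightarrow> type1_chart n s d dd i z = (\<Prod>j=1..dd i. z i - of_nat j)"
  unfolding type1_chart_def type1_g_def by simp

lemma chart_high:
  "i \<in> {s+1..r} \<Longrightarrow> type1_chart n s d dd i z = (\<Prod>j=1..dd i. phi i j z) * psi i z"
  unfolding type1_chart_def type1_g_def by (simp add: phi1_eq_phi psi1_chart_eq_psi)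

lemma mem_zero_set_iff:
  "z \<in> zero_set r (type1_chart n s d dd) \<longleftrightarrow>
     (\<forall>k. k \<notin> {1..r} \<longrightarrow> z k = 0) \<and> (\<forall>i\<in>{1..s}. \<exists>j\<in>{1..dd i}. z i = of_nat j)
     \<and> (\<forall>i\<in>{s+1..r}. (\<exists>j\<in>{1..dd i}. phi i j z = 0) \<or> psi i z = 0)"
proof -
  have "{1..r} = {1..s} \<union> {s+1..r}" using s_lt_n by (auto simp: r_def)
  moreover have "type1_chart n s d dd i z = 0 \<longleftrightarrow> (\<exists>j\<in>{1..dd i}. z i = of_nat j)"
    if "i \<in> {1..s}" for i
    using that by (simp add: chart_low)
  moreover have "type1_chart n s d dd i z = 0 \<longleftrightarrow> (\<exists>j\<in>{1..dd i}. phi i j z = 0) \<or> psi i z = 0"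
    if "i \<in> {s+1..r}" for i
    using that by (simp add: chart_high)
  ultimately show ?thesis unfolding zero_set_def by blast
qed

definition "phi_pairs = {(i, j). i \<in> {s+1..r} \<and> j \<in> {1..dd i}}"
definition "phi_zeros z = {(i, j) \<in> phi_pairs. phi i j z = 0}"
definition "psi_zeros z = {i \<in> {s+1..r}. psi i z = 0}"

lemma finite_phi_pairs: "finite phi_pairs"
proof (rule finite_subset)
  show "phi_pairs \<subseteq> {s+1..r} \<times> {1..d}"
  proof
    fix x assume "x \<in> phi_pairs"
    then obtain i j where x: "x = (i, j)" "i \<in> {s+1..r}" "j \<in> {1..dd i}" by (auto simp: phi_pairs_def)
    then have "dd i \<le> d" using degree_bounds[of i] by simp
    with x show "x \<in> {s+1..r} \<times> {1..d}" by simp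
  qed
qed simp

lemma finite_phi_zeros: "finite (phi_zeros z)"
  by (rule finite_subset[OF _ finite_phi_pairs]) (auto simp: phi_zeros_def)

text \<open>The offsets are pairwise distinct because \<open>j \<le> d\<^sub>i \<le> d\<close>.\<close>

lemma inj_on_phi_offset: "inj_on (\<lambda>(i, j). phi_offset i j) phi_pairs"
proof (rule inj_onI, clarify)
  fix i j i' j' assume ij: "(i, j) \<in> phi_pairs" "(i', j') \<in> phi_pairs"
    and eq: "phi_offset i j = phi_offset i' j'"
  have "j - 1 < d" "j' - 1 < d" using ij degree_bounds[of i] degree_bounds[of i']
    by (auto simp: phi_pairs_def)
  then have "phi_offset i j div d = i - s - 1" "phi_offset i j mod d = j - 1"
    "phi_offset i' j' div d = i' - s - 1" "phi_offset i' j' mod d = j' - 1"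
    using d_pos by (simp_all add: phi_offset_def)
  then have "i - s - 1 = i' - s - 1" "j - 1 = j' - 1" using eq by metis+
  then show "i = i' \<and> j = j'" using ij by (auto simp: phi_pairs_def)
qed

lemma inj_on_psi_offset: "inj_on psi_offset {s+1..r}"
  by (rule inj_onI) (auto simp: psi_offset_def)

lemma card_phi_zeros_le: "card (phi_zeros z) \<le> m"
proof -
  have "card (phi_zeros z) = card ((\<lambda>(i, j). phi_offset i j) ` phi_zeros z)"
    by (rule card_image[symmetric], rule inj_on_subset[OF inj_on_phi_offset])
      (auto simp: phi_zeros_def)
  also have "\<dots> \<le> m"
    using finite_phi_zeros by (intro card_common_zeros_cauchy_form_le) (auto simp: phi_zeros_def phi_def)
  finally show ?thesis .
qed

lemma card_psi_zeros_le: "card (psi_zeros z) \<le> p"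
proof -
  have "card (psi_zeros z) = card (psi_offset ` psi_zeros z)"
    by (rule card_image[symmetric], rule inj_on_subset[OF inj_on_psi_offset]) (auto simp: psi_zeros_def)
  also have "\<dots> \<le> p"
    by (intro card_common_zeros_cauchy_form_le) (auto simp: psi_zeros_def psi_def)
  finally show ?thesis .
qed

text \<open>A label \<open>(g, E, J)\<close> records the grid values of the first \<open>s\<close> coordinates, the rows
  \<open>E\<close> in which a factor \<open>\<phi>\<^sub>i\<^sub>j\<close> vanishes and, through \<open>J\<close>, which one; in the other rows \<open>\<psi>\<^sub>i\<close>
  vanishes.\<close>

definition "labels = PiE {1..s} (\<lambda>i. {1..dd i}) \<times>
  (SIGMA E:{E. E \<subseteq> {s+1..r} \<and> card E = m}. PiE E (\<lambda>i. {1..dd i}))"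

lemma mem_labels_iff:
  "(g, E, J) \<in> labels \<longleftrightarrow>
     g \<in> PiE {1..s} (\<lambda>i. {1..dd i}) \<and> E \<subseteq> {s+1..r} \<and> card E = m \<and> J \<in> PiE E (\<lambda>i. {1..dd i})"
  unfolding labels_def by auto

lemma finite_row_subsets: "finite {E. E \<subseteq> {s+1..r} \<and> card E = m}"
  by (rule finite_subset[of _ "Pow {s+1..r}"]) auto

lemma finite_labels: "finite labels"
  unfolding labels_def
  by (intro finite_cartesian_product finite_PiE finite_SigmaI finite_row_subsets) (auto dest: finite_subset)

lemma card_labels:
  "card labels = (\<Prod>i=1..s. dd i) * (\<Sum>E | E \<subseteq> {s+1..r} \<and> card E = m. \<Prod>j\<in>E. dd j)"
proof -
  have "card (SIGMA E:{E. E \<subseteq> {s+1..r} \<and> card E = m}. PiE E (\<lambda>i. {1..dd i})) =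
      (\<Sum>E | E \<subseteq> {s+1..r} \<and> card E = m. card (PiE E (\<lambda>i. {1..dd i})))"
    using finite_row_subsets by (subst card_SigmaI) (auto intro!: finite_PiE dest: finite_subset)
  also have "\<dots> = (\<Sum>E | E \<subseteq> {s+1..r} \<and> card E = m. \<Prod>j\<in>E. dd j)"
    by (rule sum.cong[OF refl]) (auto simp: card_PiE dest: finite_subset)
  finally show ?thesis unfolding labels_def by (simp add: card_cartesian_product card_PiE)
qed

definition "graph E J = (\<lambda>i. (i, J i)) ` E"

definition "x_sol E J = (SOME c. \<forall>a\<in>(\<lambda>(i, j). phi_offset i j) ` graph E J. cauchy_form m a c = 0)"
definition "mu_sol E = (SOME c. \<forall>a\<in>psi_offset ` ({s+1..r} - E). cauchy_form p a c = 0)"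

definition point :: "(nat \<Rightarrow> nat) \<Rightarrow> nat set \<Rightarrow> (nat \<Rightarrow> nat) \<Rightarrow> nat \<Rightarrow> complex" where
  "point g E J k =
     (if k \<in> {1..s} then of_nat (g k)
      else if k \<in> {s+1..n} then x_sol E J (k - s)
      else if k \<in> {n+1..r} then mu_sol E (k - n) else 0)"

lemma point_grid: "k \<in> {1..s} \<Longrightarrow> point g E J k = of_nat (g k)"
  by (simp add: point_def)

lemma point_x: "k \<in> {1..m} \<Longrightarrow> point g E J (s + k) = x_sol E J k"
  using s_gt_1 by (auto simp: point_def m_def r_def)

lemma point_mu: "k \<in> {1..p} \<Longrightarrow> point g E J (n + k) = mu_sol E k"
  using s_gt_1 s_lt_n by (auto simp: point_def p_def r_def)

lemma point_outside: "k \<notin> {1..r} \<Longrightarrow> point g E J k = 0"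
  using s_gt_1 s_lt_n by (auto simp: point_def r_def)

lemma ball_coordsI:
  assumes "\<forall>k\<in>{1..s}. P k" and "\<forall>k\<in>{1..m}. P (s + k)" and "\<forall>k\<in>{1..p}. P (n + k)"
  shows "\<forall>q\<in>{1..r}. P q"
proof
  fix q assume q: "q \<in> {1..r}"
  consider "q \<in> {1..s}" | "q - s \<in> {1..m}" "q = s + (q - s)" | "q - n \<in> {1..p}" "q = n + (q - n)"
    using q s_gt_1 s_lt_n by (force simp: m_def p_def r_def)
  then show "P q" using assms by cases metis+
qed

lemma phi_upd: "phi i j (z(q := t)) = phi i j z + cauchy_coeff m (phi_offset i j) s q * (t - z q)"
  unfolding phi_def by (rule cauchy_form_upd)

lemma psi_upd: "psi i (z(q := t)) = psi i z + cauchy_coeff p (psi_offset i) n q * (t - z q)"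
  unfolding psi_def by (rule cauchy_form_upd)

lemma partial_chart_low:
  "i \<in> {1..s} \<Longrightarrow> partial (type1_chart n s d dd i) q z = (if q = i then grid_deriv (dd i) (z i) else 0)"
  by (rule partial_grid_factor) (simp add: chart_low)

lemma partial_chart_high:
  assumes "i \<in> {s+1..r}"
  shows "partial (type1_chart n s d dd i) q z =
    (\<Sum>j\<in>{1..dd i}. cauchy_coeff m (phi_offset i j) s q * (\<Prod>l\<in>{1..dd i}-{j}. phi i l z)) * psi i z
    + (\<Prod>j\<in>{1..dd i}. phi i j z) * cauchy_coeff p (psi_offset i) n q"
proof (rule partial_eqI)
  fix t
  show "type1_chart n s d dd i (z(q := t)) =
      (\<Prod>j\<in>{1..dd i}. phi i j z + cauchy_coeff m (phi_offset i j) s q * (t - z q)) *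
      (psi i z + cauchy_coeff p (psi_offset i) n q * (t - z q))"
    using assms by (simp add: chart_high phi_upd psi_upd)
qed (rule has_field_derivative_prod_affine_mult_affine)

lemma partial_chart_phi_zero:
  assumes i: "i \<in> {s+1..r}" and j: "j \<in> {1..dd i}" and zero: "phi i j z = 0"
  shows "partial (type1_chart n s d dd i) q z =
    ((\<Prod>l\<in>{1..dd i}-{j}. phi i l z) * psi i z) * cauchy_coeff m (phi_offset i j) s q"
proof -
  have "(\<Prod>l\<in>{1..dd i}. phi i l z) = 0" using j zero by (intro prod_zero) auto
  moreover have "(\<Sum>j'\<in>{1..dd i}. cauchy_coeff m (phi_offset i j') s q * (\<Prod>l\<in>{1..dd i}-{j'}. phi i l z)) =
      cauchy_coeff m (phi_offset i j) s q * (\<Prod>l\<in>{1..dd i}-{j}. phi i l z)"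
    using j zero by (intro sum_prod_Diff_at_zero) auto
  ultimately show ?thesis unfolding partial_chart_high[OF i] by simp
qed

lemma partial_chart_psi_zero:
  "i \<in> {s+1..r} \<Longrightarrow> psi i z = 0 \<Longrightarrow>
    partial (type1_chart n s d dd i) q z = (\<Prod>j\<in>{1..dd i}. phi i j z) * cauchy_coeff p (psi_offset i) n q"
  by (simp add: partial_chart_high)

context
  fixes g E J
  assumes label: "(g, E, J) \<in> labels"
begin

lemma finite_E: "finite E"
  using label by (auto simp: mem_labels_iff dest: finite_subset)

lemma card_graph: "card (graph E J) = m"
  using label unfolding graph_def by (subst card_image) (auto simp: mem_labels_iff inj_on_def)

lemma card_psi_rows: "card ({s+1..r} - E) = p"
  using label finite_E card_rows by (auto simp: mem_labels_iff card_Diff_subset)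

lemma card_phi_offsets: "card ((\<lambda>(i, j). phi_offset i j) ` graph E J) = m"
proof -
  have "graph E J \<subseteq> phi_pairs" using label by (auto simp: mem_labels_iff graph_def phi_pairs_def)
  then show ?thesis using card_graph card_image inj_on_subset[OF inj_on_phi_offset] by metis
qed

lemma card_psi_offsets: "card (psi_offset ` ({s+1..r} - E)) = p"
  using card_psi_rows inj_on_subset[OF inj_on_psi_offset] by (subst card_image) auto

lemma x_sol_zero: "\<forall>a\<in>(\<lambda>(i, j). phi_offset i j) ` graph E J. cauchy_form m a (x_sol E J) = 0"
proof -
  have "finite ((\<lambda>(i, j). phi_offset i j) ` graph E J)" by (simp add: graph_def finite_E)
  from common_zero_cauchy_form_exists[OF this card_phi_offsets] show ?thesis
    unfolding x_sol_def by (rule someI_ex)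
qed

lemma mu_sol_zero: "\<forall>a\<in>psi_offset ` ({s+1..r} - E). cauchy_form p a (mu_sol E) = 0"
  using common_zero_cauchy_form_exists[OF _ card_psi_offsets] unfolding mu_sol_def
  by (rule someI_ex) simp

lemma phi_point: "phi i j (point g E J) = cauchy_form m (phi_offset i j) (x_sol E J)"
  unfolding phi_def by (rule cauchy_form_cong) (simp add: point_x)

lemma psi_point: "psi i (point g E J) = cauchy_form p (psi_offset i) (mu_sol E)"
  unfolding psi_def by (rule cauchy_form_cong) (simp add: point_mu)

lemma phi_zeros_point: "phi_zeros (point g E J) = graph E J"
proof -
  have "graph E J \<subseteq> phi_zeros (point g E J)"
    using label x_sol_zero
    by (auto simp: graph_def phi_zeros_def phi_pairs_def mem_labels_iff phi_point)
  then show ?thesis using card_seteq[OF finite_phi_zeros] card_phi_zeros_le card_graph by metis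
qed

lemma psi_zeros_point: "psi_zeros (point g E J) = {s+1..r} - E"
proof -
  have "{s+1..r} - E \<subseteq> psi_zeros (point g E J)"
    using mu_sol_zero by (auto simp: psi_zeros_def psi_point)
  moreover have "finite (psi_zeros (point g E J))" by (simp add: psi_zeros_def)
  ultimately show ?thesis using card_seteq card_psi_zeros_le card_psi_rows by metis
qed

lemma point_in_zero_set: "point g E J \<in> zero_set r (type1_chart n s d dd)"
  unfolding mem_zero_set_iff
proof (intro conjI ballI allI impI)
  fix i assume i: "i \<in> {s+1..r}"
  show "(\<exists>j\<in>{1..dd i}. phi i j (point g E J) = 0) \<or> psi i (point g E J) = 0"
  proof (cases "i \<in> E")
    case True
    then have "(i, J i) \<in> phi_zeros (point g E J)" using phi_zeros_point by (auto simp: graph_def)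
    then show ?thesis by (auto simp: phi_zeros_def phi_pairs_def)
  next
    case False
    then show ?thesis using psi_zeros_point i by (auto simp: psi_zeros_def)
  qed
qed (use label in \<open>auto simp: point_grid point_outside mem_labels_iff\<close>)

lemma eq_point_if_zeros:
  assumes outside: "\<forall>k. k \<notin> {1..r} \<longrightarrow> z k = 0"
    and grid: "\<forall>i\<in>{1..s}. z i = of_nat (g i)"
    and phi_zero: "\<forall>i\<in>E. phi i (J i) z = 0"
    and psi_zero: "\<forall>i\<in>{s+1..r} - E. psi i z = 0"
  shows "z = point g E J"
proof
  have x: "\<forall>k\<in>{1..m}. z (s + k) = x_sol E J k"
    using phi_zero x_sol_zero card_phi_offsets
    by (intro common_zero_cauchy_form_unique) (auto simp: graph_def finite_E phi_def)
  have mu: "\<forall>k\<in>{1..p}. z (n + k) = mu_sol E k"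
    using psi_zero mu_sol_zero card_psi_offsets
    by (intro common_zero_cauchy_form_unique) (auto simp: psi_def)
  fix k
  show "z k = point g E J k"
  proof (cases "k \<in> {1..r}")
    case True
    have "\<forall>k\<in>{1..r}. z k = point g E J k"
      using grid x mu by (intro ball_coordsI) (simp_all add: point_grid point_x point_mu)
    with True show ?thesis by blast
  qed (simp add: outside point_outside)
qed

context
  fixes v :: "nat \<Rightarrow> complex"
  assumes ker: "\<forall>i\<in>{1..r}. (\<Sum>q=1..r. partial (type1_chart n s d dd i) q (point g E J) * v q) = 0"
begin

lemma kernel_grid_coords: "\<forall>k\<in>{1..s}. v k = 0"
proof
  fix i assume i: "i \<in> {1..s}"
  then have "i \<in> {1..r}" using s_lt_n by (auto simp: r_def)
  moreover have "g i \<in> {1..dd i}" using label i by (auto simp: mem_labels_iff)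
  then have "grid_deriv (dd i) (point g E J i) \<noteq> 0" using grid_deriv_nonzero point_grid[OF i] by simp
  moreover from \<open>i \<in> {1..r}\<close> have
    "(\<Sum>q=1..r. partial (type1_chart n s d dd i) q (point g E J) * v q) = 0"
    using ker by blast
  ultimately show "v i = 0" by (intro zero_if_diagonal_row) (auto simp: partial_chart_low[OF i])
qed

lemma kernel_x_coords: "\<forall>k\<in>{1..m}. v (s + k) = 0"
proof (rule cauchy_kernel_trivial[OF _ card_phi_offsets])
  show "finite ((\<lambda>(i, j). phi_offset i j) ` graph E J)" by (simp add: graph_def finite_E)
  show "\<forall>a\<in>(\<lambda>(i, j). phi_offset i j) ` graph E J. (\<Sum>k=1..m. v (s + k) / of_nat (a + k)) = 0"
  proof
    fix a assume "a \<in> (\<lambda>(i, j). phi_offset i j) ` graph E J"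
    then obtain i where i: "i \<in> E" "a = phi_offset i (J i)" by (auto simp: graph_def)
    let ?z = "point g E J"
    have row: "i \<in> {s+1..r}" and Ji: "J i \<in> {1..dd i}" using label i by (auto simp: mem_labels_iff)
    have "(i, J i) \<in> phi_zeros ?z" unfolding phi_zeros_point using i by (simp add: graph_def)
    then have zero: "phi i (J i) ?z = 0" by (simp add: phi_zeros_def)
    have "phi i l ?z \<noteq> 0" if "l \<in> {1..dd i} - {J i}" for l
    proof -
      have "(i, l) \<notin> phi_zeros ?z" using that unfolding phi_zeros_point by (auto simp: graph_def)
      then show ?thesis using row that by (simp add: phi_zeros_def phi_pairs_def)
    qed
    moreover have "psi i ?z \<noteq> 0"
    proof -
      have "i \<notin> psi_zeros ?z" unfolding psi_zeros_point using i by simp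
      then show ?thesis using row by (simp add: psi_zeros_def)
    qed
    ultimately have "(\<Prod>l\<in>{1..dd i}-{J i}. phi i l ?z) * psi i ?z \<noteq> 0" by simp
    then have "(\<Sum>q\<in>{1..r}. cauchy_coeff m (phi_offset i (J i)) s q * v q) = 0"
      using ker row by (intro sum_scaled_row_zero[OF partial_chart_phi_zero[OF row Ji zero]]) auto
    moreover have "(\<Sum>q\<in>{1..r}. cauchy_coeff m (phi_offset i (J i)) s q * v q) =
        (\<Sum>k=1..m. v (s + k) / of_nat (phi_offset i (J i) + k))"
      using s_gt_1 s_lt_n by (intro sum_cauchy_coeff) (simp add: m_def r_def)
    ultimately show "(\<Sum>k=1..m. v (s + k) / of_nat (a + k)) = 0" using i by simp
  qed
qed

lemma kernel_mu_coords: "\<forall>k\<in>{1..p}. v (n + k) = 0"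
proof (rule cauchy_kernel_trivial[OF _ card_psi_offsets])
  show "\<forall>a\<in>psi_offset ` ({s+1..r} - E). (\<Sum>k=1..p. v (n + k) / of_nat (a + k)) = 0"
  proof
    fix a assume "a \<in> psi_offset ` ({s+1..r} - E)"
    then obtain i where i: "i \<in> {s+1..r} - E" "a = psi_offset i" by auto
    let ?z = "point g E J"
    have row: "i \<in> {s+1..r}" using i by simp
    have "i \<in> psi_zeros ?z" unfolding psi_zeros_point using i by simp
    then have zero: "psi i ?z = 0" by (simp add: psi_zeros_def)
    have "phi i l ?z \<noteq> 0" if "l \<in> {1..dd i}" for l
    proof -
      have "(i, l) \<notin> phi_zeros ?z" using i unfolding phi_zeros_point by (auto simp: graph_def)
      then show ?thesis using row that by (simp add: phi_zeros_def phi_pairs_def)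
    qed
    then have "(\<Prod>l\<in>{1..dd i}. phi i l ?z) \<noteq> 0" by simp
    then have "(\<Sum>q\<in>{1..r}. cauchy_coeff p (psi_offset i) n q * v q) = 0"
      using ker row by (intro sum_scaled_row_zero[OF partial_chart_psi_zero[OF row zero]]) auto
    moreover have "(\<Sum>q\<in>{1..r}. cauchy_coeff p (psi_offset i) n q * v q) =
        (\<Sum>k=1..p. v (n + k) / of_nat (psi_offset i + k))"
      using s_gt_1 by (intro sum_cauchy_coeff) (simp add: p_def r_def)
    ultimately show "(\<Sum>k=1..p. v (n + k) / of_nat (a + k)) = 0" using i by simp
  qed
qed simp

end

lemma jacobian_det_point_nonzero: "jacobian_det r (type1_chart n s d dd) (point g E J) \<noteq> 0"
proof (rule jacobian_det_nonzero)
  fix v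
  assume ker: "\<forall>i\<in>{1..r}. (\<Sum>q=1..r. partial (type1_chart n s d dd i) q (point g E J) * v q) = 0"
  show "\<forall>q\<in>{1..r}. v q = 0"
    by (rule ball_coordsI[of "\<lambda>q. v q = 0", OF kernel_grid_coords[OF ker] kernel_x_coords[OF ker]
          kernel_mu_coords[OF ker]])
qed

end

lemma rows_covered_by_zeros:
  assumes "z \<in> zero_set r (type1_chart n s d dd)"
  shows "{s+1..r} \<subseteq> fst ` phi_zeros z \<union> psi_zeros z"
proof
  fix i assume i: "i \<in> {s+1..r}"
  then consider j where "j \<in> {1..dd i}" "phi i j z = 0" | "psi i z = 0"
    using assms unfolding mem_zero_set_iff by blast
  then show "i \<in> fst ` phi_zeros z \<union> psi_zeros z"
  proof cases
    case 1
    then have "(i, j) \<in> phi_zeros z" using i by (simp add: phi_zeros_def phi_pairs_def)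
    then show ?thesis by force
  qed (use i in \<open>simp add: psi_zeros_def\<close>)
qed

text \<open>At most \<open>m\<close> factors \<open>\<phi>\<^sub>i\<^sub>j\<close> and at most \<open>p\<close> factors \<open>\<psi>\<^sub>i\<close> vanish, while each of the
  \<open>m + p\<close> rows needs one, so both bounds are attained.\<close>

lemma card_phi_zero_rows:
  assumes "z \<in> zero_set r (type1_chart n s d dd)"
  shows "card (fst ` phi_zeros z) = m"
proof -
  have "m + p = card {s+1..r}" by (rule card_rows[symmetric])
  also have "\<dots> \<le> card (fst ` phi_zeros z \<union> psi_zeros z)"
    using rows_covered_by_zeros[OF assms]
    by (intro card_mono) (simp_all add: finite_phi_zeros psi_zeros_def)
  also have "\<dots> \<le> card (fst ` phi_zeros z) + card (psi_zeros z)" by (rule card_Un_le)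
  finally have "m + p \<le> card (fst ` phi_zeros z) + card (psi_zeros z)" .
  moreover have "card (fst ` phi_zeros z) \<le> m"
    using card_image_le[OF finite_phi_zeros] card_phi_zeros_le le_trans by blast
  ultimately show ?thesis using card_psi_zeros_le[of z] by linarith
qed

lemma zero_set_subset_points:
  assumes zero: "z \<in> zero_set r (type1_chart n s d dd)"
  shows "\<exists>(g, E, J) \<in> labels. z = point g E J"
proof -
  obtain g where g: "g \<in> PiE {1..s} (\<lambda>i. {1..dd i})" "\<forall>i\<in>{1..s}. z i = of_nat (g i)"
    using zero unfolding mem_zero_set_iff by (metis grid_choice)
  define E where "E = fst ` phi_zeros z"
  define J where "J = restrict (\<lambda>i. SOME j. (i, j) \<in> phi_zeros z) E"
  have J: "(i, J i) \<in> phi_zeros z" if "i \<in> E" for i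
    using that unfolding E_def J_def by (auto intro: someI)
  have "E \<subseteq> {s+1..r}" by (auto simp: E_def phi_zeros_def phi_pairs_def)
  moreover have "J \<in> PiE E (\<lambda>i. {1..dd i})"
  proof (rule PiE_I)
    fix i assume "i \<in> E"
    then show "J i \<in> {1..dd i}" using J[of i] by (simp add: phi_zeros_def phi_pairs_def)
  qed (simp add: J_def)
  ultimately have lab: "(g, E, J) \<in> labels"
    using g card_phi_zero_rows[OF zero] by (simp add: mem_labels_iff E_def)
  have "z = point g E J"
  proof (rule eq_point_if_zeros[OF lab])
    show "\<forall>i\<in>{s+1..r} - E. psi i z = 0"
      using rows_covered_by_zeros[OF zero] by (auto simp: E_def psi_zeros_def)
  qed (use zero g J in \<open>auto simp: mem_zero_set_iff phi_zeros_def\<close>)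
  with lab show ?thesis by blast
qed

lemma point_eq_if_proj_x_eq:
  assumes lab: "(g, E, J) \<in> labels" and lab': "(g', E', J') \<in> labels"
    and eq: "proj_x n (point g E J) = proj_x n (point g' E' J')"
  shows "(g, E, J) = (g', E', J')"
proof -
  have coord: "point g E J k = point g' E' J' k" if "k \<in> {1..n}" for k
    using fun_cong[OF eq, of k] that by (simp add: proj_x_def)
  have "of_nat (g k) = (of_nat (g' k) :: complex)" if "k \<in> {1..s}" for k
    using coord[of k] that s_lt_n by (simp add: point_grid)
  then have "g = g'" using lab lab' by (intro PiE_ext[of g "{1..s}"]) (auto simp: mem_labels_iff)
  have "phi i j (point g E J) = phi i j (point g' E' J')" for i j
    unfolding phi_def using coord by (intro cauchy_form_cong) (auto simp: m_def)
  then have graph: "graph E J = graph E' J'"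
    using phi_zeros_point[OF lab] phi_zeros_point[OF lab'] by (simp add: phi_zeros_def)
  moreover have "fst ` graph E J = E" for E J by (simp add: graph_def image_image)
  ultimately have "E = E'" by metis
  moreover have "J = J'"
    using lab lab' graph \<open>E = E'\<close>
    by (intro PiE_ext[of J E]) (auto simp: mem_labels_iff graph_def)
  ultimately show ?thesis using \<open>g = g'\<close> by simp
qed

lemma zero_set_eq_points: "zero_set r (type1_chart n s d dd) = (\<lambda>(g, E, J). point g E J) ` labels"
proof (intro equalityI subsetI)
  fix z assume "z \<in> zero_set r (type1_chart n s d dd)"
  then show "z \<in> (\<lambda>(g, E, J). point g E J) ` labels" using zero_set_subset_points by force
qed (auto intro: point_in_zero_set)

lemma inj_on_proj_x_points: "inj_on (proj_x n \<circ> (\<lambda>(g, E, J). point g E J)) labels"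
proof (rule inj_onI)
  fix t t' assume "t \<in> labels" "t' \<in> labels"
    and "(proj_x n \<circ> (\<lambda>(g, E, J). point g E J)) t = (proj_x n \<circ> (\<lambda>(g, E, J). point g E J)) t'"
  then show "t = t'" using point_eq_if_proj_x_eq by (cases t, cases t') auto
qed

lemma inj_on_points: "inj_on (\<lambda>(g, E, J). point g E J) labels"
  using inj_on_proj_x_points by (rule inj_on_imageI2)

lemma inj_on_proj_x_zero_set: "inj_on (proj_x n) (zero_set r (type1_chart n s d dd))"
  unfolding zero_set_eq_points using inj_on_proj_x_points by (rule inj_on_imageI)

theorem type1_chart_zero_set:
  "finite (zero_set r (type1_chart n s d dd))
   \<and> card (zero_set r (type1_chart n s d dd)) = card labels
   \<and> inj_on (proj_x n) (zero_set r (type1_chart n s d dd))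
   \<and> (\<forall>z\<in>zero_set r (type1_chart n s d dd). jacobian_det r (type1_chart n s d dd) z \<noteq> 0)"
  using finite_labels card_image[OF inj_on_points] inj_on_proj_x_zero_set jacobian_det_point_nonzero
  unfolding zero_set_eq_points by auto

end

theorem mainTheorem17:
  fixes n s d :: nat and dd :: "nat \<Rightarrow> nat"
  assumes "1 \<le> s" and "s \<le> n" and "d \<ge> 1"
    and "\<forall>i\<in>{1..s+n-1}. 1 \<le> dd i \<and> dd i \<le> d"
  shows "(1 < s \<and> s < n \<longrightarrow>
            (let r = s + n - 1; V = zero_set r (type1_chart n s d dd) in
               finite V
             \<and> card V = (\<Prod>i=1..s. dd i) *
                  (\<Sum>E | E \<subseteq> {s+1..r} \<and> card E = n - s. \<Prod>j\<in>E. dd j)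
             \<and> inj_on (proj_x n) V
             \<and> (\<forall>z\<in>V. jacobian_det r (type1_chart n s d dd) z \<noteq> 0)))
       \<and> (s = 1 \<or> s = n \<longrightarrow>
            (let V = zero_set n (type1_simple dd) in
               finite V
             \<and> card V = (\<Prod>i=1..n. dd i)
             \<and> (\<forall>z\<in>V. jacobian_det n (type1_simple dd) z \<noteq> 0)))"
  unfolding Let_def
  apply (rule conjI; rule impI)
  subgoal premises range
  proof -
    interpret type1_system n s d dd using range assms by unfold_locales auto
    show ?thesis using type1_chart_zero_set card_labels unfolding r_def m_def by simp
  qed
  subgoal
    using card_image[OF inj_on_grid_point] jacobian_det_type1_simple_nonzero
    unfolding zero_set_type1_simple by (simp add: card_PiE finite_PiE)
  done

end
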